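(* For all $r,s\in\mathbb{N}$ and all $a\in(0,1]$, $$\bar c_{2rs}(E(a,1))\le\bar c_{2r}(E(a,1)),$$ where $\bar c_k:=c_k^{\mathrm{EH}}/\bigl(\bigl[\tfrac{k+1}2\bigr]\pi\bigr)$ is the normalized $k$-th Ekeland–Hofer capacity on ellipsoids in $\mathbb{R}^4$.
   Context: $E(a_1,a_2)=\{z\in\mathbb{C}^2:|z_1|^2/a_1+|z_2|^2/a_2<1\}$. Ekeland–Hofer capacities on ellipsoids: writing the numbers $j a_i\pi$ ($j\in\mathbb{N}$, $i=1,2$) in increasing order with repetitions as $d_1\le d_2\le\dots$, $c_k^{\mathrm{EH}}(E(a_1,a_2))=d_k$. $[x]$ is the largest integer $\le x$. *)

theory Defs
  imports Complex_Main
begin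

text \<open>Spectrum multiset of the ellipsoid E(a1,a2): the numbers j * a_i * pi, j >= 1, i = 1,2,
  counted with repetition. The k-th Ekeland-Hofer capacity is the k-th smallest such number
  (k >= 1), i.e. the least x such that at least k of these numbers are <= x.\<close>

definition ell_count :: "real \<Rightarrow> real \<Rightarrow> real \<Rightarrow> nat" where
  "ell_count a1 a2 x = card {(i, j). (i::nat) \<in> {1, 2} \<and> (j::nat) \<ge> 1 \<and>
      real j * (if i = 1 then a1 else a2) * pi \<le> x}"

definition EH_cap :: "nat \<Rightarrow> real \<Rightarrow> real \<Rightarrow> real" where
  "EH_cap k a1 a2 = Inf {x. k \<le> ell_count a1 a2 x}"

definition EH_cap_norm :: "nat \<Rightarrow> real \<Rightarrow> real \<Rightarrow> real" where
  "EH_cap_norm k a1 a2 = EH_cap k a1 a2 / (real ((k + 1) div 2) * pi)"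

end

theory Submission
  imports Defs
begin

text \<open>For x \<ge> 0 the number of spectral values of E(a1, a2) not exceeding x is
  [x / (a1 pi)] + [x / (a2 pi)]. Since s [y] \<le> [s y], at least s k spectral values lie below
  s x whenever k of them lie below x, so c_{sk} \<le> s c_k for every a1, a2 > 0. For k = 2r the normalising factors are r pi and r s pi, which turns
  this into the claim.\<close>

lemma le_nat_floor_iff:
  fixes y :: real
  assumes "j \<ge> 1"
  shows "j \<le> nat \<lfloor>y\<rfloor> \<longleftrightarrow> real j \<le> y"
proof
  assume "j \<le> nat \<lfloor>y\<rfloor>"
  with assms have "int j \<le> \<lfloor>y\<rfloor>"
    by linarith
  then show "real j \<le> y"
    by (simp add: le_floor_iff)
qed (rule le_nat_floor)

lemma multiples_le_eq_atLeastAtMost: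
  fixes c x :: real
  assumes "c > 0"
  shows "{j::nat. j \<ge> 1 \<and> real j * c \<le> x} = {1..nat \<lfloor>x / c\<rfloor>}"
proof -
  have "real j * c \<le> x \<longleftrightarrow> j \<le> nat \<lfloor>x / c\<rfloor>" if "j \<ge> 1" for j
  proof -
    have "real j * c \<le> x \<longleftrightarrow> real j \<le> x / c"
      using assms by (simp add: pos_le_divide_eq)
    also have "\<dots> \<longleftrightarrow> j \<le> nat \<lfloor>x / c\<rfloor>"
      using that by (simp add: le_nat_floor_iff)
    finally show ?thesis .
  qed
  then show ?thesis
    by auto
qed

lemma ell_count_eq:
  assumes "a1 > 0" and "a2 > 0"
  shows "ell_count a1 a2 x = nat \<lfloor>x / (a1 * pi)\<rfloor> + nat \<lfloor>x / (a2 * pi)\<rfloor>"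
proof -
  let ?J = "\<lambda>c. {j::nat. j \<ge> 1 \<and> real j * c \<le> x}"
  have "{(i, j). (i::nat) \<in> {1, 2} \<and> (j::nat) \<ge> 1 \<and>
      real j * (if i = 1 then a1 else a2) * pi \<le> x}
    = Pair 1 ` ?J (a1 * pi) \<union> Pair 2 ` ?J (a2 * pi)"
    by (auto simp: mult.assoc)
  also have "\<dots> = Pair 1 ` {1..nat \<lfloor>x / (a1 * pi)\<rfloor>} \<union> Pair 2 ` {1..nat \<lfloor>x / (a2 * pi)\<rfloor>}"
    using assms multiples_le_eq_atLeastAtMost[of "a1 * pi" x]
      multiples_le_eq_atLeastAtMost[of "a2 * pi" x]
    by simp
  also have "card \<dots> = nat \<lfloor>x / (a1 * pi)\<rfloor> + nat \<lfloor>x / (a2 * pi)\<rfloor>"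
    by (subst card_Un_disjoint) (auto simp: card_image inj_on_def)
  finally show ?thesis
    unfolding ell_count_def .
qed

lemma ell_count_eq_0:
  assumes "a1 > 0" and "a2 > 0" and "x < 0"
  shows "ell_count a1 a2 x = 0"
proof -
  have "x / (a1 * pi) \<le> 0" and "x / (a2 * pi) \<le> 0"
    using assms by (simp_all add: divide_nonpos_pos)
  then show ?thesis
    unfolding ell_count_eq[OF assms(1,2)] by (simp only: nat_floor_neg add_0)
qed

lemma mult_ell_count_le:
  assumes "a1 > 0" and "a2 > 0"
  shows "s * ell_count a1 a2 x \<le> ell_count a1 a2 (real s * x)"
proof -
  have floor_scale: "s * nat \<lfloor>y\<rfloor> \<le> nat \<lfloor>real s * y\<rfloor>" for y :: real
    using le_mult_nat_floor[of "real s" y] by simp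
  show ?thesis
    using assms floor_scale[of "x / (a1 * pi)"] floor_scale[of "x / (a2 * pi)"]
    by (simp add: ell_count_eq add_mult_distrib2)
qed

lemma EH_cap_mult_le:
  assumes "a1 > 0" and "a2 > 0" and "k \<ge> 1" and "s \<ge> 1"
  shows "EH_cap (s * k) a1 a2 \<le> real s * EH_cap k a1 a2"
proof -
  define S where "S n = {x. n \<le> ell_count a1 a2 x}" for n
  have "real k * a2 * pi \<in> S k"
    using assms by (simp add: S_def ell_count_eq)
  then have S_k_nonempty: "S k \<noteq> {}"
    by blast
  have "bdd_below (S (s * k))"
  proof (rule bdd_belowI)
    fix x assume "x \<in> S (s * k)"
    then have "s * k \<le> ell_count a1 a2 x"
      by (simp add: S_def)
    moreover have "1 \<le> s * k"
      using assms by simp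
    ultimately have "ell_count a1 a2 x \<noteq> 0"
      by linarith
    then show "0 \<le> x"
      using ell_count_eq_0[OF assms(1,2)] by (meson not_le)
  qed
  moreover have "real s * x \<in> S (s * k)" if "x \<in> S k" for x
    using that mult_ell_count_le[OF assms(1,2), of s x]
    by (simp add: S_def) (meson le_trans mult_le_mono2)
  ultimately have "Inf (S (s * k)) / real s \<le> Inf (S k)"
    using assms S_k_nonempty
    by (intro cInf_greatest) (auto simp: divide_le_eq mult.commute intro: cInf_lower)
  then show ?thesis
    using assms by (simp add: EH_cap_def S_def divide_le_eq mult.commute)
qed

theorem mainTheorem7:
  fixes r s :: nat and a :: real
  assumes "r \<ge> 1" and "s \<ge> 1" and "0 < a" and "a \<le> 1"
  shows "EH_cap_norm (2 * r * s) a 1 \<le> EH_cap_norm (2 * r) a 1"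
proof -
  have "EH_cap (s * (2 * r)) a 1 \<le> real s * EH_cap (2 * r) a 1"
    using assms by (intro EH_cap_mult_le) auto
  then have "EH_cap (2 * r * s) a 1 / (real (r * s) * pi)
      \<le> real s * EH_cap (2 * r) a 1 / (real (r * s) * pi)"
    by (intro divide_right_mono) (auto simp: mult.commute)
  also have "\<dots> = EH_cap (2 * r) a 1 / (real r * pi)"
    using assms by simp
  finally show ?thesis
    by (simp add: EH_cap_norm_def)
qed

end
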